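(* Let $q\ge2$ and let $V'\subseteq\mathbb Z^2$ be $\mathbb Z^2$-periodic with cell $Q_0$ and $V_0=V'\cap Q_0$. There exists $C>0$ depending only on $q$ and $V'$ such that for every $\varepsilon>0$, with $V:=\varepsilon V'$, and every $u\in H^1(\mathcal G_\varepsilon)$, $\left|\varepsilon\,\frac{2\,\#(\mathbb Z^2\cap Q_0)}{\#V_0}\sum_{\mathrm v\in V}|u(\mathrm v)|^q-\|u\|_{L^q(\mathcal G_\varepsilon)}^q\right|\le C\,\varepsilon\,\|u\|_{L^{2(q-1)}(\mathcal G_\varepsilon)}^{q-1}\|u'\|_{L^2(\mathcal G_\varepsilon)}$.
   Context: For $\varepsilon>0$, $\mathcal G_\varepsilon$ is the metric graph embedded in $\mathbb R^2$ with vertex set $\varepsilon\mathbb Z^2$ and an edge (a segment of length $\varepsilon$) joining every pair of vertices at Euclidean distance $\varepsilon$. $H^1(\mathcal G_\varepsilon)$ is the space of continuous $u:\mathcal G_\varepsilon\to\mathbb R$ whose restriction to each edge is in $H^1$ of that edge with $\|u\|_{L^2(\mathcal G_\varepsilon)}^2+\|u'\|_{L^2(\mathcal G_\varepsilon)}^2<\infty$; $L^r$ norms on $\mathcal G_\varepsilon$ are sums over edges of one-dimensional integrals. A set $V'\subset\mathbb Z^2$ is $\mathbb Z^2$-periodic if there exist linearly independent $\vec v_1,\vec v_2\in\mathbb Z^2$ with $V'=V'+k_1\vec v_1+k_2\vec v_2$ for all $k_1,k_2\in\mathbb Z$. For $(i,j)\in\mathbb Z^2$, $L^1_{i,j}$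 denotes the union of the vertex $(i,j)$ and the two open edges of $\mathcal G_1$ from $(i,j)$ to $(i+1,j)$ and to $(i,j+1)$. The cell is $Q_0:=\bigcup_{n\in I}L^1_{i_n,j_n}$, where $\{(i_n,j_n)\}_{n\in I}$ is a finite complete system of representatives of $\mathbb Z^2$ modulo the lattice $\mathbb Z\vec v_1+\mathbb Z\vec v_2$ (so the translates of $Q_0$ by the lattice are pairwise disjoint and cover $\mathcal G_1$), and $V_0:=V'\cap Q_0$. *)

theory Defs
  imports "HOL-Analysis.Analysis"
begin

type_synonym zpt = "int \<times> int"

definition zadd :: "zpt \<Rightarrow> zpt \<Rightarrow> zpt" where
  "zadd p r = (fst p + fst r, snd p + snd r)"

definition zscale :: "int \<Rightarrow> zpt \<Rightarrow> zpt" where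
  "zscale k p = (k * fst p, k * snd p)"

definition lin_indep2 :: "zpt \<Rightarrow> zpt \<Rightarrow> bool" where
  "lin_indep2 v1 v2 \<longleftrightarrow>
     (\<forall>a b :: real. a * of_int (fst v1) + b * of_int (fst v2) = 0 \<and>
                    a * of_int (snd v1) + b * of_int (snd v2) = 0 \<longrightarrow> a = 0 \<and> b = 0)"

definition lat_shift :: "zpt \<Rightarrow> zpt \<Rightarrow> int \<Rightarrow> int \<Rightarrow> zpt \<Rightarrow> zpt" where
  "lat_shift v1 v2 k1 k2 p = zadd p (zadd (zscale k1 v1) (zscale k2 v2))"

definition periodic_wrt :: "zpt set \<Rightarrow> zpt \<Rightarrow> zpt \<Rightarrow> bool" where
  "periodic_wrt V' v1 v2 \<longleftrightarrow> lin_indep2 v1 v2 \<and>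
     (\<forall>k1 k2. V' = lat_shift v1 v2 k1 k2 ` V')"

definition complete_reps :: "zpt \<Rightarrow> zpt \<Rightarrow> zpt set \<Rightarrow> bool" where
  "complete_reps v1 v2 R \<longleftrightarrow> finite R \<and>
     (\<forall>p. \<exists>r\<in>R. \<exists>k1 k2. p = lat_shift v1 v2 k1 k2 r) \<and>
     (\<forall>r\<in>R. \<forall>r'\<in>R. \<forall>k1 k2. r' = lat_shift v1 v2 k1 k2 r \<longrightarrow> r' = r)"

definition L1 :: "zpt \<Rightarrow> (real \<times> real) set" where
  "L1 p = {(of_int (fst p), of_int (snd p))}
        \<union> {(of_int (fst p) + t, of_int (snd p)) | t. 0 < t \<and> t < 1}
        \<union> {(of_int (fst p), of_int (snd p) + t) | t. 0 < t \<and> t < 1}"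

definition cellQ0 :: "zpt set \<Rightarrow> (real \<times> real) set" where
  "cellQ0 R = (\<Union>p\<in>R. L1 p)"

text \<open>Z^2 \<inter> Q_0 and V_0 = V' \<inter> Q_0 (as sets of integer points).\<close>
definition int_pts :: "(real \<times> real) set \<Rightarrow> zpt set" where
  "int_pts S = {p. (of_int (fst p), of_int (snd p)) \<in> S}"

text \<open>Edges of G_eps are indexed by (p, b): the edge starts at eps*p and goes in direction
  (1,0) if b, and (0,1) otherwise. It is parametrised by arclength t \<in> [0, eps].\<close>
type_synonym edge = "zpt \<times> bool"

definition edge_pt :: "real \<Rightarrow> edge \<Rightarrow> real \<Rightarrow> real \<times> real" where
  "edge_pt eps e t =
     (if snd e then (eps * of_int (fst (fst e)) + t, eps * of_int (snd (fst e)))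
      else (eps * of_int (fst (fst e)), eps * of_int (snd (fst e)) + t))"

definition vertex_pt :: "real \<Rightarrow> zpt \<Rightarrow> real \<times> real" where
  "vertex_pt eps p = (eps * of_int (fst p), eps * of_int (snd p))"

definition H1_edge :: "real \<Rightarrow> (real \<Rightarrow> real) \<Rightarrow> (real \<Rightarrow> real) \<Rightarrow> bool" where
  "H1_edge eps f g \<longleftrightarrow> g \<in> borel_measurable lborel \<and>
     set_integrable lborel {0..eps} (\<lambda>t. (g t)\<^sup>2) \<and>
     (\<forall>x\<in>{0..eps}. f x = f 0 + (LBINT t:{0..x}. g t))"

text \<open>Continuity of u on G_eps is built in since u is a single function of the point and each
  edge restriction is absolutely continuous up to the endpoints.\<close>
definition H1_graph :: "real \<Rightarrow> (real \<times> real \<Rightarrow> real) \<Rightarrow> (edge \<Rightarrow> real \<Rightarrow> real) \<Rightarrow> bool" where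
  "H1_graph eps u g \<longleftrightarrow>
     (\<forall>e. H1_edge eps (\<lambda>t. u (edge_pt eps e t)) (g e)) \<and>
     (\<integral>\<^sup>+ e. (\<integral>\<^sup>+ t\<in>{0..eps}. ennreal ((u (edge_pt eps e t))\<^sup>2) \<partial>lborel) \<partial>count_space UNIV) < \<infinity> \<and>
     (\<integral>\<^sup>+ e. (\<integral>\<^sup>+ t\<in>{0..eps}. ennreal ((g e t)\<^sup>2) \<partial>lborel) \<partial>count_space UNIV) < \<infinity>"

definition Lpow :: "real \<Rightarrow> (real \<times> real \<Rightarrow> real) \<Rightarrow> real \<Rightarrow> real" where
  "Lpow eps u r = infsum (\<lambda>e. LBINT t:{0..eps}. \<bar>u (edge_pt eps e t)\<bar> powr r) UNIV"

definition deriv_L2sq :: "real \<Rightarrow> (edge \<Rightarrow> real \<Rightarrow> real) \<Rightarrow> real" where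
  "deriv_L2sq eps g = infsum (\<lambda>e. LBINT t:{0..eps}. (g e t)\<^sup>2) UNIV"

end

theory Submission
  imports Defs
begin

(* Inside one cell, compare the value |u(v)|^q at a vertex v of V_0 with the mean of |u|^q over
   an edge e of the cell.  Along a staircase path from v to e, the oscillation of |u|^q across an
   edge is at most q times the integral of |u|^(q-1) |u'| over that edge, so each such difference
   costs eps q times a sum of these edge integrals.  Averaging over V_0 and the 2 #R edges of the
   cell produces the weight 2 #R / #V_0, and summing over all lattice translates of the cell uses
   every edge integral a bounded number of times.  Cauchy-Schwarz finally bounds the sum of the
   integrals of |u|^(q-1) |u'| over all edges by ||u||_{2(q-1)}^(q-1) ||u'||_2. *)

lemma abs_powr_diff_le:
  fixes a b q :: real
  assumes "a \<ge> 0" "b \<ge> 0" "q \<ge> 1"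
  shows "\<bar>a powr q - b powr q\<bar> \<le> q * (max a b) powr (q - 1) * \<bar>a - b\<bar>"
proof -
  have ordered: "y powr q - x powr q \<le> q * y powr (q - 1) * (y - x)" if "0 \<le> x" "x \<le> y" for x y :: real
  proof (cases "x = 0")
    case True
    then show ?thesis
      using that assms by (cases "y = 0") (simp_all add: powr_diff)
  next
    case False
    show ?thesis
    proof (cases "x = y")
      case False
      with that have "x < y" by simp
      have "\<exists>z. x < z \<and> z < y \<and> y powr q - x powr q = (y - x) * (q * z powr (q - 1))"
        by (rule MVT2[OF \<open>x < y\<close>]) (use \<open>x \<noteq> 0\<close> that in \<open>auto intro!: derivative_eq_intros\<close>)
      then obtain z where z: "x < z" "z < y" "y powr q - x powr q = (y - x) * (q * z powr (q - 1))"
        by blast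
      have "z powr (q - 1) \<le> y powr (q - 1)"
        using z that assms by (intro powr_mono2) auto
      then have "(y - x) * (q * z powr (q - 1)) \<le> (y - x) * (q * y powr (q - 1))"
        using \<open>x < y\<close> assms by (intro mult_left_mono) auto
      then show ?thesis using z by (simp add: algebra_simps)
    qed simp
  qed
  show ?thesis
  proof (cases "b \<le> a")
    case True
    then show ?thesis
      using ordered[OF assms(2) True] powr_mono2[of q b a] assms by (simp add: max_def)
  next
    case False
    then show ?thesis
      using ordered[OF assms(1), of b] powr_mono2[of q a b] assms by (simp add: max_def abs_minus_commute)
  qed
qed

lemma abs_powr_two [simp]: "\<bar>x::real\<bar> powr 2 = x\<^sup>2"
  by (cases "x = 0") (simp_all add: powr_numeral)

lemma abs_powr_le_bound_powr_mult_square: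
  fixes x K r :: real
  assumes "r \<ge> 2" "\<bar>x\<bar> \<le> K"
  shows "\<bar>x\<bar> powr r \<le> K powr (r - 2) * x\<^sup>2"
proof -
  have "\<bar>x\<bar> powr r = \<bar>x\<bar> powr ((r - 2) + 2)" by simp
  also have "\<dots> = \<bar>x\<bar> powr (r - 2) * \<bar>x\<bar> powr 2" by (rule powr_add)
  also have "\<dots> \<le> K powr (r - 2) * \<bar>x\<bar> powr 2"
    using assms by (intro mult_right_mono powr_mono2) auto
  finally show ?thesis by simp
qed

lemma mult_le_weighted_squares:
  fixes a b l :: real
  assumes "l > 0"
  shows "a * b \<le> (l * a\<^sup>2 + b\<^sup>2 / l) / 2"
proof -
  have "0 \<le> (l * a - b)\<^sup>2 / l" using assms by simp
  also have "(l * a - b)\<^sup>2 / l = l * a\<^sup>2 + b\<^sup>2 / l - 2 * a * b"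
    using assms by (simp add: power2_eq_square field_simps)
  finally show ?thesis by simp
qed

text \<open>Cauchy-Schwarz through weighted AM-GM: the weight \<open>l = sqrt Y / sqrt X\<close> is optimal, and if
  \<open>X\<close> or \<open>Y\<close> vanishes, extreme weights force \<open>S \<le> 0\<close>.\<close>
lemma le_sqrt_mult_sqrt_if_weighted:
  fixes S X Y :: real
  assumes "X \<ge> 0" "Y \<ge> 0" and weighted: "\<And>l. l > 0 \<Longrightarrow> S \<le> (l * X + Y / l) / 2"
  shows "S \<le> sqrt X * sqrt Y"
proof (cases "X > 0 \<and> Y > 0")
  case True
  define l where "l = sqrt Y / sqrt X"
  have "l > 0" using True by (simp add: l_def)
  have "l * X = sqrt X * sqrt Y" "Y / l = sqrt X * sqrt Y"
    unfolding l_def using True real_sqrt_mult_self[of X] real_sqrt_mult_self[of Y]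
    by (simp_all add: divide_simps)
  with weighted[OF \<open>l > 0\<close>] show ?thesis by simp
next
  case False
  have "S \<le> 0"
  proof (rule ccontr)
    assume "\<not> S \<le> 0"
    then have "S > 0" by simp
    define l where "l = (if X = 0 then (Y + 1) / S else S / (X + 1))"
    have "l > 0" unfolding l_def using \<open>S > 0\<close> assms(1,2) by simp
    have "(l * X + Y / l) / 2 \<le> S / 2"
    proof (cases "X = 0")
      case True
      then have "(l * X + Y / l) / 2 = S * (Y / (Y + 1)) / 2"
        unfolding l_def using \<open>S > 0\<close> assms(2) by (simp add: field_simps)
      also have "\<dots> \<le> S / 2" using \<open>S > 0\<close> assms(2) by (intro divide_right_mono mult_left_le) auto
      finally show ?thesis .
    next
      case False
      with \<open>\<not> (X > 0 \<and> Y > 0)\<close> assms(1,2) have "Y = 0" by auto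
      then have "(l * X + Y / l) / 2 = S * (X / (X + 1)) / 2"
        unfolding l_def using False \<open>S > 0\<close> assms(1) by (simp add: field_simps)
      also have "\<dots> \<le> S / 2" using \<open>S > 0\<close> assms(1) by (intro divide_right_mono mult_left_le) auto
      finally show ?thesis .
    qed
    with weighted[OF \<open>l > 0\<close>] \<open>S > 0\<close> show False by linarith
  qed
  then show ?thesis using assms(1,2) by (meson order_trans real_sqrt_ge_zero zero_le_mult_iff)
qed

lemma abs_diff_le_sum_steps:
  fixes G h :: "int \<Rightarrow> real"
  assumes step: "\<And>i. \<bar>G (i + 1) - G i\<bar> \<le> h i"
  shows "\<bar>G x - G y\<bar> \<le> (\<Sum>i\<in>{min x y..<max x y}. h i)"
proof -
  have ordered: "\<bar>G b - G a\<bar> \<le> (\<Sum>i\<in>{a..<b}. h i)" if "a \<le> b" for a b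
    using that
  proof (induction b rule: int_ge_induct)
    case (step b)
    have "{a..<b + 1} = insert b {a..<b}" using step.hyps by auto
    then show ?case using assms[of b] step.IH by simp
  qed simp
  show ?thesis
    using ordered[of x y] ordered[of y x] by (cases "x \<le> y") (simp_all add: abs_minus_commute)
qed

lemma abs_scaled_sum_diff_le:
  fixes a :: "'a \<Rightarrow> real" and b :: "'b \<Rightarrow> real"
  assumes "finite A" "A \<noteq> {}"
  shows "\<bar>real (card B) / real (card A) * (\<Sum>x\<in>A. a x) - (\<Sum>y\<in>B. b y)\<bar>
           \<le> (\<Sum>x\<in>A. \<Sum>y\<in>B. \<bar>a x - b y\<bar>) / real (card A)"
proof -
  have A: "real (card A) > 0" using assms by (simp add: card_gt_0_iff)
  have "real (card B) / real (card A) * (\<Sum>x\<in>A. a x) - (\<Sum>y\<in>B. b y)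
          = (\<Sum>x\<in>A. \<Sum>y\<in>B. a x - b y) / real (card A)"
    using A by (simp add: sum_subtractf sum_distrib_left sum_distrib_right field_simps)
  also have "\<bar>\<dots>\<bar> \<le> (\<Sum>x\<in>A. \<Sum>y\<in>B. \<bar>a x - b y\<bar>) / real (card A)"
    using A by (simp add: divide_right_mono order_trans[OF sum_abs sum_mono[OF sum_abs]])
  finally show ?thesis .
qed

section \<open>Absolutely continuous functions on an interval\<close>

lemma H1_edge_Henstock:
  fixes f g :: "real \<Rightarrow> real"
  assumes H: "H1_edge L f g"
  shows "g absolutely_integrable_on {0..L}"
    and "(\<lambda>t. (g t)\<^sup>2) integrable_on {0..L}"
    and "(LBINT t:{0..L}. (g t)\<^sup>2) = integral {0..L} (\<lambda>t. (g t)\<^sup>2)"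
    and "\<And>x. x \<in> {0..L} \<Longrightarrow> f x = f 0 + integral {0..x} g"
    and "continuous_on {0..L} f"
proof -
  have gm: "g \<in> borel_measurable lborel" and g2: "set_integrable lborel {0..L} (\<lambda>t. (g t)\<^sup>2)"
    and fx: "\<And>x. x \<in> {0..L} \<Longrightarrow> f x = f 0 + (LBINT t:{0..x}. g t)"
    using H unfolding H1_edge_def by blast+
  have one: "set_integrable lborel {0..L} (\<lambda>t. 1::real)"
    unfolding set_integrable_def by (rule borel_integrable_compact) auto
  have sg: "set_integrable lborel {0..L} g"
  proof (rule set_integrable_bound[OF set_integral_add(1)[OF one g2]])
    show "set_borel_measurable lborel {0..L} g"
      unfolding set_borel_measurable_def using gm by measurable
    have "\<bar>y\<bar> \<le> 1 + y\<^sup>2" for y :: real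
      using mult_le_weighted_squares[of 1 "\<bar>y\<bar>" 1] by simp
    then show "AE x in lborel. x \<in> {0..L} \<longrightarrow> norm (g x) \<le> norm (1 + (g x)\<^sup>2)"
      by (intro AE_I2) (simp add: abs_le_iff)
  qed
  show "g absolutely_integrable_on {0..L}"
    using set_borel_integral_eq_integral(1)[OF sg] set_borel_integral_eq_integral(1)[OF set_integrable_abs[OF sg]]
    unfolding absolutely_integrable_on_def by simp
  show "(\<lambda>t. (g t)\<^sup>2) integrable_on {0..L}"
    using set_borel_integral_eq_integral(1)[OF g2] .
  show "(LBINT t:{0..L}. (g t)\<^sup>2) = integral {0..L} (\<lambda>t. (g t)\<^sup>2)"
    using set_borel_integral_eq_integral(2)[OF g2] .
  have fx': "f x = f 0 + integral {0..x} g" if "x \<in> {0..L}" for x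
  proof -
    have "set_integrable lborel {0..x} g" using that by (intro set_integrable_subset[OF sg]) auto
    then show ?thesis using fx[OF that] set_borel_integral_eq_integral(2) by metis
  qed
  then show "\<And>x. x \<in> {0..L} \<Longrightarrow> f x = f 0 + integral {0..x} g" .
  have "continuous_on {0..L} (\<lambda>x. f 0 + integral {0..x} g)"
    using set_borel_integral_eq_integral(1)[OF sg]
    by (intro continuous_intros indefinite_integral_continuous_1)
  then show "continuous_on {0..L} f"
    by (rule continuous_on_eq) (metis fx')
qed

lemma abs_diff_le_integral_abs:
  fixes f g :: "real \<Rightarrow> real"
  assumes g: "g absolutely_integrable_on {0..L}"
    and f: "\<And>x. x \<in> {0..L} \<Longrightarrow> f x = f 0 + integral {0..x} g"
    and "0 \<le> c" "c \<le> d" "d \<le> L"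
  shows "\<bar>f d - f c\<bar> \<le> integral {c..d} (\<lambda>y. \<bar>g y\<bar>)"
proof -
  have gi: "g integrable_on {0..L}" and gai: "(\<lambda>y. \<bar>g y\<bar>) integrable_on {0..L}"
    using g unfolding absolutely_integrable_on_def by auto
  have cd: "c \<in> {0..L}" "d \<in> {0..L}"
    using assms by auto
  have "integral {0..c} g + integral {c..d} g = integral {0..d} g"
    using assms by (intro Henstock_Kurzweil_Integration.integral_combine integrable_on_subinterval[OF gi]) auto
  then have "f d - f c = integral {c..d} g"
    using f[OF cd(1)] f[OF cd(2)] by linarith
  also have "\<bar>\<dots>\<bar> \<le> integral {c..d} (\<lambda>y. \<bar>g y\<bar>)"
    using assms integral_norm_bound_integral[of g "{c..d}" "\<lambda>y. \<bar>g y\<bar>"]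
      integrable_on_subinterval[OF gi, of c d] integrable_on_subinterval[OF gai, of c d]
    by auto
  finally show ?thesis .
qed

lemma integral_abs_le_sqrt_integral_square:
  fixes g :: "real \<Rightarrow> real"
  assumes "a \<le> b" "(\<lambda>y. \<bar>g y\<bar>) integrable_on {a..b}" "(\<lambda>y. (g y)\<^sup>2) integrable_on {a..b}"
  shows "integral {a..b} (\<lambda>y. \<bar>g y\<bar>) \<le> sqrt (b - a) * sqrt (integral {a..b} (\<lambda>y. (g y)\<^sup>2))"
proof (rule le_sqrt_mult_sqrt_if_weighted)
  show "0 \<le> b - a" "0 \<le> integral {a..b} (\<lambda>y. (g y)\<^sup>2)"
    using assms by (auto intro: integral_nonneg)
  fix l :: real
  assume "l > 0"
  have "integral {a..b} (\<lambda>y. \<bar>g y\<bar>) \<le> integral {a..b} (\<lambda>y. (l + (g y)\<^sup>2 / l) / 2)"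
  proof (rule integral_le)
    show "\<bar>g y\<bar> \<le> (l + (g y)\<^sup>2 / l) / 2" for y
      using mult_le_weighted_squares[OF \<open>l > 0\<close>, of 1 "\<bar>g y\<bar>"] by simp
  qed (use assms in \<open>auto intro!: integrable_on_divide integrable_add\<close>)
  also have "\<dots> = (l * (b - a) + integral {a..b} (\<lambda>y. (g y)\<^sup>2) / l) / 2"
    using assms integral_add[OF integrable_const_ivl integrable_on_divide[OF assms(3)], of l l]
    by (simp add: mult.commute)
  finally show "integral {a..b} (\<lambda>y. \<bar>g y\<bar>) \<le> (l * (b - a) + integral {a..b} (\<lambda>y. (g y)\<^sup>2) / l) / 2" .
qed

text \<open>Chaining the bound over a uniform partition of mesh smaller than \<open>\<delta>\<close>.\<close>
lemma abs_diff_le_integral_if_local: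
  fixes F \<phi> :: "real \<Rightarrow> real"
  assumes "a \<le> b" "\<delta> > 0" and \<phi>: "\<phi> integrable_on {a..b}"
    and local: "\<And>c d. a \<le> c \<Longrightarrow> c \<le> d \<Longrightarrow> d \<le> b \<Longrightarrow> d - c < \<delta> \<Longrightarrow>
                  \<bar>F d - F c\<bar> \<le> integral {c..d} \<phi>"
  shows "\<bar>F b - F a\<bar> \<le> integral {a..b} \<phi>"
proof -
  define N :: nat where "N = nat \<lceil>(b - a) / \<delta>\<rceil> + 1"
  define h where "h = (b - a) / real N"
  define x where "x = (\<lambda>k::nat. a + real k * h)"
  have "N > 0" "(b - a) / \<delta> < real N" unfolding N_def by linarith+
  then have h: "0 \<le> h" "h < \<delta>"
    using assms by (simp_all add: h_def field_simps)
  have x_le_b: "x k \<le> b" if "k \<le> N" for k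
  proof -
    have "real k * h \<le> real N * h" using that h by (intro mult_right_mono) auto
    then show ?thesis using \<open>N > 0\<close> by (simp add: x_def h_def)
  qed
  have "\<bar>F (x k) - F a\<bar> \<le> integral {a..x k} \<phi>" if "k \<le> N" for k
    using that
  proof (induction k)
    case (Suc k)
    have x_Suc: "x (Suc k) = x k + h" by (simp add: x_def algebra_simps)
    have in_ab: "a \<le> x k" "x k \<le> x (Suc k)" "x (Suc k) \<le> b"
      using x_le_b[OF Suc.prems] h by (auto simp: x_Suc x_def distrib_right)
    have "integral {a..x k} \<phi> + integral {x k..x (Suc k)} \<phi> = integral {a..x (Suc k)} \<phi>"
      using in_ab by (intro Henstock_Kurzweil_Integration.integral_combine
          integrable_on_subinterval[OF \<phi>]) auto
    moreover have "\<bar>F (x (Suc k)) - F (x k)\<bar> \<le> integral {x k..x (Suc k)} \<phi>"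
      using in_ab h by (intro local) (auto simp: x_Suc)
    ultimately show ?case using Suc by simp
  qed (simp add: x_def)
  moreover have "x N = b" using \<open>N > 0\<close> by (simp add: x_def h_def)
  ultimately show ?thesis by (metis order_refl)
qed

lemma continuous_on_imp_integrable_mult_abs:
  fixes h g :: "real \<Rightarrow> real"
  assumes "continuous_on {a..b} h" "g absolutely_integrable_on {a..b}"
  shows "(\<lambda>x. h x * \<bar>g x\<bar>) integrable_on {a..b}"
proof -
  have "(\<lambda>x. \<bar>g x\<bar>) absolutely_integrable_on {a..b}"
    using assms(2) by (simp add: absolutely_integrable_abs_iff absolutely_integrable_on_def)
  moreover have "h \<in> borel_measurable (lebesgue_on {a..b})"
    using assms(1) by (intro continuous_imp_measurable_on_sets_lebesgue) auto
  moreover have "bounded (h ` {a..b})"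
    using assms(1) by (intro compact_imp_bounded compact_continuous_image) auto
  ultimately have "(\<lambda>x. h x * \<bar>g x\<bar>) absolutely_integrable_on {a..b}"
    by (intro absolutely_integrable_bounded_measurable_product_real) auto
  then show ?thesis using set_lebesgue_integral_eq_integral(1) by blast
qed

text \<open>On short intervals the factor \<open>\<bar>f\<bar> powr (q - 1)\<close> of the mean value theorem is within
  \<open>\<delta>\<close> of its value at every point, by uniform continuity.\<close>
lemma abs_powr_diff_le_integral_plus:
  fixes f g :: "real \<Rightarrow> real"
  assumes q: "q > 1" and f: "continuous_on {0..L} f" and g: "g absolutely_integrable_on {0..L}"
    and f_g: "\<And>x. x \<in> {0..L} \<Longrightarrow> f x = f 0 + integral {0..x} g"
    and ab: "0 \<le> a" "a \<le> b" "b \<le> L" and "\<delta> > 0"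
  shows "\<bar>\<bar>f b\<bar> powr q - \<bar>f a\<bar> powr q\<bar>
           \<le> q * integral {a..b} (\<lambda>y. (\<bar>f y\<bar> powr (q - 1) + \<delta>) * \<bar>g y\<bar>)"
proof -
  define H where "H = (\<lambda>y. \<bar>f y\<bar> powr (q - 1))"
  define \<phi> where "\<phi> = (\<lambda>y. q * ((H y + \<delta>) * \<bar>g y\<bar>))"
  have H: "continuous_on {0..L} H"
    unfolding H_def using q f by (intro continuous_on_powr' continuous_intros) auto
  have \<phi>: "\<phi> integrable_on {0..L}"
    unfolding \<phi>_def by (intro integrable_on_mult_right continuous_on_imp_integrable_mult_abs
        g continuous_intros H)
  have gai: "(\<lambda>y. \<bar>g y\<bar>) integrable_on {0..L}"
    using g unfolding absolutely_integrable_on_def by auto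
  obtain d where "d > 0"
    and d: "\<And>x x'. x \<in> {0..L} \<Longrightarrow> x' \<in> {0..L} \<Longrightarrow> dist x' x < d \<Longrightarrow> dist (H x') (H x) < \<delta>"
    using compact_uniformly_continuous[OF H] \<open>\<delta> > 0\<close> unfolding uniformly_continuous_on_def
    by (metis compact_Icc)
  have "\<bar>\<bar>f b\<bar> powr q - \<bar>f a\<bar> powr q\<bar> \<le> integral {a..b} \<phi>"
  proof (rule abs_diff_le_integral_if_local[OF \<open>a \<le> b\<close> \<open>d > 0\<close>])
    show "\<phi> integrable_on {a..b}"
      using integrable_on_subinterval[OF \<phi>] ab by auto
    fix c c' assume cc': "a \<le> c" "c \<le> c'" "c' \<le> b" "c' - c < d"
    then have sub: "{c..c'} \<subseteq> {0..L}" using ab by auto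
    define M where "M = (max \<bar>f c'\<bar> \<bar>f c\<bar>) powr (q - 1)"
    have M_le: "M \<le> H y + \<delta>" if "y \<in> {c..c'}" for y
    proof -
      have "H c' < H y + \<delta>" "H c < H y + \<delta>"
        using d[of y c'] d[of y c] that sub cc' by (auto simp: dist_real_def abs_less_iff)
      moreover have "M = H c' \<or> M = H c" unfolding M_def H_def by (simp add: max_def)
      ultimately show ?thesis by auto
    qed
    have "\<bar>\<bar>f c'\<bar> powr q - \<bar>f c\<bar> powr q\<bar> \<le> q * M * \<bar>\<bar>f c'\<bar> - \<bar>f c\<bar>\<bar>"
      unfolding M_def using q by (intro abs_powr_diff_le) auto
    also have "\<dots> \<le> q * M * integral {c..c'} (\<lambda>y. \<bar>g y\<bar>)"
      using abs_diff_le_integral_abs[OF g f_g, of c c'] cc' ab q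
      by (intro mult_left_mono) (auto simp: M_def)
    also have "\<dots> = integral {c..c'} (\<lambda>y. q * (M * \<bar>g y\<bar>))"
      by (simp add: mult.assoc)
    also have "\<dots> \<le> integral {c..c'} \<phi>"
      unfolding \<phi>_def using M_le q integrable_on_subinterval[OF gai sub] integrable_on_subinterval[OF \<phi> sub]
      by (intro integral_le) (auto simp: \<phi>_def intro!: mult_left_mono mult_right_mono integrable_on_mult_right)
    finally show "\<bar>\<bar>f c'\<bar> powr q - \<bar>f c\<bar> powr q\<bar> \<le> integral {c..c'} \<phi>" .
  qed
  then show ?thesis by (simp add: \<phi>_def H_def)
qed

lemma abs_powr_diff_le_integral:
  fixes f g :: "real \<Rightarrow> real"
  assumes q: "q > 1" and f: "continuous_on {0..L} f" and g: "g absolutely_integrable_on {0..L}"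
    and f_g: "\<And>x. x \<in> {0..L} \<Longrightarrow> f x = f 0 + integral {0..x} g"
    and "s \<in> {0..L}" "t \<in> {0..L}"
  shows "\<bar>\<bar>f s\<bar> powr q - \<bar>f t\<bar> powr q\<bar> \<le> q * integral {0..L} (\<lambda>y. \<bar>f y\<bar> powr (q - 1) * \<bar>g y\<bar>)"
proof (rule field_le_epsilon)
  define I where "I = integral {0..L} (\<lambda>y. \<bar>f y\<bar> powr (q - 1) * \<bar>g y\<bar>)"
  define J where "J = integral {0..L} (\<lambda>y. \<bar>g y\<bar>)"
  have H: "continuous_on {0..L} (\<lambda>y. \<bar>f y\<bar> powr (q - 1))"
    using q f by (intro continuous_on_powr' continuous_intros) auto
  have gai: "(\<lambda>y. \<bar>g y\<bar>) integrable_on {0..L}"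
    using g unfolding absolutely_integrable_on_def by auto
  have "J \<ge> 0" unfolding J_def using gai by (intro integral_nonneg) auto
  fix e :: real
  assume "e > 0"
  define \<delta> where "\<delta> = e / (q * (J + 1))"
  have "\<delta> > 0"
    using \<open>e > 0\<close> \<open>J \<ge> 0\<close> q by (simp add: \<delta>_def)
  have "q > 0" "J + 1 > 0"
    using \<open>J \<ge> 0\<close> q by simp_all
  then have "q * \<delta> * J = e * (J / (J + 1))"
    unfolding \<delta>_def by (simp add: divide_simps)
  also have "\<dots> \<le> e"
    using \<open>e > 0\<close> \<open>J \<ge> 0\<close> by (intro mult_left_le) auto
  finally have "q * \<delta> * J \<le> e" .
  have full: "\<bar>\<bar>f y\<bar> powr q - \<bar>f x\<bar> powr q\<bar> \<le> q * I + q * \<delta> * J"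
    if "0 \<le> x" "x \<le> y" "y \<le> L" for x y
  proof -
    have \<phi>: "(\<lambda>y. (\<bar>f y\<bar> powr (q - 1) + \<delta>) * \<bar>g y\<bar>) integrable_on {0..L}"
      by (intro continuous_on_imp_integrable_mult_abs g continuous_intros H)
    have "integral {x..y} (\<lambda>y. (\<bar>f y\<bar> powr (q - 1) + \<delta>) * \<bar>g y\<bar>)
            \<le> integral {0..L} (\<lambda>y. (\<bar>f y\<bar> powr (q - 1) + \<delta>) * \<bar>g y\<bar>)"
      using that \<open>\<delta> > 0\<close> by (intro integral_subset_le integrable_on_subinterval[OF \<phi>] \<phi>) auto
    also have "\<dots> = I + \<delta> * J"
      unfolding I_def J_def distrib_right
      using integral_add[OF continuous_on_imp_integrable_mult_abs[OF H g] integrable_on_mult_right[OF gai, of \<delta>]]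
      by simp
    finally have "q * integral {x..y} (\<lambda>y. (\<bar>f y\<bar> powr (q - 1) + \<delta>) * \<bar>g y\<bar>) \<le> q * (I + \<delta> * J)"
      using q by (intro mult_left_mono) auto
    then show ?thesis
      using abs_powr_diff_le_integral_plus[OF q f g f_g that \<open>\<delta> > 0\<close>] by (simp add: algebra_simps)
  qed
  have "\<bar>\<bar>f s\<bar> powr q - \<bar>f t\<bar> powr q\<bar> \<le> q * I + q * \<delta> * J"
    using full[of s t] full[of t s] assms(5,6) by (cases "s \<le> t") (auto simp: abs_minus_commute)
  with \<open>q * \<delta> * J \<le> e\<close> show "\<bar>\<bar>f s\<bar> powr q - \<bar>f t\<bar> powr q\<bar> \<le> q * I + e"
    by linarith
qed

lemma square_le_mean_square_plus_deriv:
  fixes f g :: "real \<Rightarrow> real"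
  assumes "L > 0" and f: "continuous_on {0..L} f" and g: "g absolutely_integrable_on {0..L}"
    and g2: "(\<lambda>y. (g y)\<^sup>2) integrable_on {0..L}"
    and f_g: "\<And>x. x \<in> {0..L} \<Longrightarrow> f x = f 0 + integral {0..x} g"
    and t: "t \<in> {0..L}"
  shows "(f t)\<^sup>2 \<le> 2 / L * integral {0..L} (\<lambda>s. (f s)\<^sup>2) + 2 * L * integral {0..L} (\<lambda>s. (g s)\<^sup>2)"
proof -
  define J where "J = integral {0..L} (\<lambda>y. \<bar>g y\<bar>)"
  define Y where "Y = integral {0..L} (\<lambda>y. (g y)\<^sup>2)"
  have gai: "(\<lambda>y. \<bar>g y\<bar>) integrable_on {0..L}"
    using g unfolding absolutely_integrable_on_def by auto
  have "J \<ge> 0" "Y \<ge> 0" unfolding J_def Y_def using gai g2 by (auto intro: integral_nonneg)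
  have "J \<le> sqrt L * sqrt Y"
    using integral_abs_le_sqrt_integral_square[of 0 L g] \<open>L > 0\<close> gai g2 by (simp add: J_def Y_def)
  then have J2: "J\<^sup>2 \<le> L * Y"
    using \<open>J \<ge> 0\<close> \<open>Y \<ge> 0\<close> \<open>L > 0\<close> power_mono[of J "sqrt L * sqrt Y" 2]
    by (simp add: power_mult_distrib)
  have diff: "\<bar>f t - f s\<bar> \<le> J" if "s \<in> {0..L}" for s
  proof -
    have ordered: "\<bar>f b - f a\<bar> \<le> J" if "0 \<le> a" "a \<le> b" "b \<le> L" for a b
      using abs_diff_le_integral_abs[OF g f_g that] integral_subset_le[of "{a..b}" "{0..L}"]
        integrable_on_subinterval[OF gai, of a b] gai that
      unfolding J_def by force
    show ?thesis
      using ordered[of s t] ordered[of t s] that t by (cases "s \<le> t") (auto simp: abs_minus_commute)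
  qed
  have pointwise: "(f t)\<^sup>2 \<le> 2 * (f s)\<^sup>2 + 2 * J\<^sup>2" if "s \<in> {0..L}" for s
  proof -
    have "(f t - f s)\<^sup>2 \<le> J\<^sup>2"
      using diff[OF that] by (metis abs_ge_zero power2_abs power_mono)
    moreover have "(f t)\<^sup>2 \<le> 2 * (f s)\<^sup>2 + 2 * (f t - f s)\<^sup>2"
      using zero_le_power2[of "f t - 2 * f s"] by (simp add: power2_eq_square algebra_simps)
    ultimately show ?thesis by linarith
  qed
  have f2: "(\<lambda>s. (f s)\<^sup>2) integrable_on {0..L}"
    using f by (intro integrable_continuous_interval continuous_intros)
  have "L * (f t)\<^sup>2 = integral {0..L} (\<lambda>s. (f t)\<^sup>2)" using \<open>L > 0\<close> by simp
  also have "\<dots> \<le> integral {0..L} (\<lambda>s. 2 * (f s)\<^sup>2 + 2 * J\<^sup>2)"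
    by (rule integral_le) (auto intro!: integrable_add integrable_on_mult_right f2 pointwise)
  also have "\<dots> = 2 * integral {0..L} (\<lambda>s. (f s)\<^sup>2) + L * (2 * J\<^sup>2)"
    using integral_add[OF integrable_on_mult_right[OF f2, of 2] integrable_const_ivl] \<open>L > 0\<close>
    by simp
  finally have "L * (f t)\<^sup>2 \<le> 2 * integral {0..L} (\<lambda>s. (f s)\<^sup>2) + L * (2 * J\<^sup>2)" .
  then have "(f t)\<^sup>2 \<le> 2 / L * integral {0..L} (\<lambda>s. (f s)\<^sup>2) + 2 * J\<^sup>2"
    using \<open>L > 0\<close> by (simp add: field_simps)
  with J2 show ?thesis by (simp add: Y_def mult.assoc)
qed

lemma summable_on_if_nn_integral_count_space_finite:
  fixes h :: "'a \<Rightarrow> real"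
  assumes "\<And>x. h x \<ge> 0" "(\<integral>\<^sup>+ x. ennreal (h x) \<partial>count_space UNIV) < \<infinity>"
  shows "h summable_on UNIV"
proof -
  have "integrable (count_space UNIV) h"
    by (rule integrableI_bounded) (use assms in auto)
  then have "Infinite_Set_Sum.abs_summable_on h UNIV"
    by (simp add: Infinite_Set_Sum.abs_summable_on_def)
  then show ?thesis
    using abs_summable_equivalent abs_summable_summable by blast
qed

lemma set_nn_integral_eq_set_integral_if_set_integrable:
  fixes h :: "real \<Rightarrow> real"
  assumes "set_integrable lborel A h" "\<And>x. h x \<ge> 0"
  shows "(\<integral>\<^sup>+ t\<in>A. ennreal (h t) \<partial>lborel) = ennreal (LBINT t:A. h t)"
proof -
  have "integrable lborel (\<lambda>t. h t * indicator A t)"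
    using assms(1) unfolding set_integrable_def by (simp add: mult.commute)
  then have "(\<integral>\<^sup>+ t. ennreal (h t * indicator A t) \<partial>lborel) = ennreal (integral\<^sup>L lborel (\<lambda>t. h t * indicator A t))"
    by (rule nn_integral_eq_integral) (use assms in \<open>auto simp: indicator_def\<close>)
  then show ?thesis
    unfolding set_lebesgue_integral_def by (simp add: nn_integral_set_ennreal mult.commute)
qed

lemma has_sum_diff:
  fixes f g :: "'a \<Rightarrow> 'b::{topological_ab_group_add}"
  assumes "(f has_sum a) A" "(g has_sum b) A"
  shows "((\<lambda>x. f x - g x) has_sum (a - b)) A"
  using has_sum_add[OF assms(1) has_sum_uminus[where f=g and a="- b", THEN iffD2]] assms(2) by simp

lemma has_sum_sum_finite:
  fixes f :: "'k \<Rightarrow> 'a \<Rightarrow> 'b::topological_comm_monoid_add"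
  assumes "finite K" "\<And>k. k \<in> K \<Longrightarrow> (f k has_sum s k) A"
  shows "((\<lambda>x. \<Sum>k\<in>K. f k x) has_sum (\<Sum>k\<in>K. s k)) A"
  using assms by (induction K rule: finite_induct) (auto intro: has_sum_add)

lemma infsum_sum_finite_le:
  fixes f :: "'k \<Rightarrow> 'a \<Rightarrow> real"
  assumes "finite K" "\<And>k. k \<in> K \<Longrightarrow> f k summable_on A" "\<And>k. k \<in> K \<Longrightarrow> infsum (f k) A \<le> M k"
  shows "(\<lambda>x. \<Sum>k\<in>K. f k x) summable_on A" "infsum (\<lambda>x. \<Sum>k\<in>K. f k x) A \<le> (\<Sum>k\<in>K. M k)"
proof -
  have "((\<lambda>x. \<Sum>k\<in>K. f k x) has_sum (\<Sum>k\<in>K. infsum (f k) A)) A"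
    using assms(1,2) by (intro has_sum_sum_finite) auto
  then show "(\<lambda>x. \<Sum>k\<in>K. f k x) summable_on A" "infsum (\<lambda>x. \<Sum>k\<in>K. f k x) A \<le> (\<Sum>k\<in>K. M k)"
    using sum_mono[OF assms(3)] by (auto simp: has_sum_iff)
qed

lemma infsum_comp_inj_le:
  fixes h :: "'b \<Rightarrow> real"
  assumes "h summable_on UNIV" "\<And>x. h x \<ge> 0" "inj f"
  shows "(h \<circ> f) summable_on UNIV" "infsum (h \<circ> f) UNIV \<le> infsum h UNIV"
proof -
  have "h summable_on range f" by (rule summable_on_subset[OF assms(1)]) auto
  then show "(h \<circ> f) summable_on UNIV"
    using summable_on_reindex[of f UNIV h] assms(3) by simp
  have "infsum (h \<circ> f) UNIV = infsum h (range f)"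
    using infsum_reindex[of f UNIV h] assms(3) by simp
  also have "\<dots> \<le> infsum h UNIV"
    by (rule infsum_mono_neutral[OF \<open>h summable_on range f\<close> assms(1)]) (auto simp: assms(2))
  finally show "infsum (h \<circ> f) UNIV \<le> infsum h UNIV" .
qed

lemma has_sum_reindex_Times_finite:
  fixes h :: "'b \<Rightarrow> real" and P :: "'c \<times> 'd \<Rightarrow> 'b"
  assumes "inj_on P (UNIV \<times> B)" "finite B" "h summable_on P ` (UNIV \<times> B)"
  shows "((\<lambda>c. \<Sum>r\<in>B. h (P (c, r))) has_sum infsum h (P ` (UNIV \<times> B))) UNIV"
proof -
  have hP: "(h \<circ> P) summable_on (UNIV \<times> B)"
    using assms(3) summable_on_reindex[OF assms(1)] by blast
  have "infsum h (P ` (UNIV \<times> B)) = infsum (\<lambda>c. infsum (\<lambda>r. h (P (c, r))) B) UNIV"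
    using infsum_reindex[OF assms(1)] infsum_Sigma_banach[OF hP] by simp
  moreover have "(\<lambda>c. infsum (\<lambda>r. h (P (c, r))) B) summable_on UNIV"
    using summable_on_SigmaD[of "h \<circ> P" UNIV "\<lambda>_. B"] hP assms(2) by simp
  ultimately show ?thesis
    using assms(2) by (simp add: has_sum_iff)
qed

section \<open>Staircase paths and lattice translates\<close>

definition stair_edges :: "zpt \<Rightarrow> zpt \<Rightarrow> edge set" where
  "stair_edges x y =
     (\<lambda>i. ((i, snd x), True)) ` {min (fst x) (fst y)..<max (fst x) (fst y)}
   \<union> (\<lambda>j. ((fst y, j), False)) ` {min (snd x) (snd y)..<max (snd x) (snd y)}"

definition shift_edge :: "zpt \<Rightarrow> edge \<Rightarrow> edge" where
  "shift_edge w e = (zadd (fst e) w, snd e)"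

lemma finite_stair_edges: "finite (stair_edges x y)"
  unfolding stair_edges_def by simp

lemma inj_shift_edge: "inj (shift_edge w)"
  unfolding shift_edge_def zadd_def by (auto intro!: injI simp: prod_eq_iff)

lemma stair_edges_zadd: "stair_edges (zadd x w) (zadd y w) = shift_edge w ` stair_edges x y"
proof -
  have shift: "h ` {m + c..<n + c} = (\<lambda>i. h (i + c)) ` {m..<n}" for h :: "int \<Rightarrow> edge" and c m n
    by (simp only: image_add_atLeastLessThan'[symmetric] image_image)
  show ?thesis
    unfolding stair_edges_def shift_edge_def zadd_def image_Un image_image
    by (simp add: shift flip: min_add_distrib_left max_add_distrib_left)
qed

definition lat_vec :: "zpt \<Rightarrow> zpt \<Rightarrow> int \<times> int \<Rightarrow> zpt" where
  "lat_vec v1 v2 c = zadd (zscale (fst c) v1) (zscale (snd c) v2)"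

lemma lat_shift_eq_zadd_lat_vec: "lat_shift v1 v2 k1 k2 p = zadd p (lat_vec v1 v2 (k1, k2))"
  unfolding lat_shift_def lat_vec_def by simp

lemma inj_lat_vec:
  assumes "lin_indep2 v1 v2"
  shows "inj (lat_vec v1 v2)"
proof (rule injI)
  fix c c' assume "lat_vec v1 v2 c = lat_vec v1 v2 c'"
  then have "real_of_int (fst c - fst c') * of_int (fst v1) + of_int (snd c - snd c') * of_int (fst v2) = 0 \<and>
             real_of_int (fst c - fst c') * of_int (snd v1) + of_int (snd c - snd c') * of_int (snd v2) = 0"
    unfolding lat_vec_def zadd_def zscale_def prod_eq_iff
    by (simp add: algebra_simps flip: of_int_mult of_int_add of_int_diff)
  with assms have "real_of_int (fst c - fst c') = 0 \<and> real_of_int (snd c - snd c') = 0"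
    unfolding lin_indep2_def by blast
  then show "c = c'" by (simp add: prod_eq_iff)
qed

lemma int_pts_cellQ0: "int_pts (cellQ0 R) = R"
proof (intro set_eqI iffI)
  fix p :: zpt assume "p \<in> int_pts (cellQ0 R)"
  then obtain r where r: "r \<in> R" and pr: "(of_int (fst p), of_int (snd p)) \<in> L1 r"
    unfolding int_pts_def cellQ0_def by auto
  have not_between: False if "0 < t" "t < 1" "of_int a = of_int b + (t::real)" for a b :: int and t
  proof -
    from that have "0 < real_of_int (a - b)" "real_of_int (a - b) < 1" by simp_all
    then have "0 < a - b" "a - b < 1" by (simp_all only: of_int_0_less_iff of_int_less_1_iff)
    then show False by simp
  qed
  from pr show "p \<in> R"
    unfolding L1_def using r not_between by (auto simp: prod_eq_iff) (metis prod.expand)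
qed (auto simp: int_pts_def cellQ0_def L1_def)

locale periodic_cell =
  fixes V' :: "zpt set" and v1 v2 :: zpt and R :: "zpt set"
  assumes periodic: "periodic_wrt V' v1 v2" and reps: "complete_reps v1 v2 R"
begin

abbreviation lat :: "int \<times> int \<Rightarrow> zpt" where
  "lat \<equiv> lat_vec v1 v2"

lemma finite_reps: "finite R"
  using reps unfolding complete_reps_def by blast

lemma inj_lat: "inj lat"
  using periodic inj_lat_vec unfolding periodic_wrt_def by blast

lemma translate_reps_surj: "\<exists>c. \<exists>r\<in>R. p = zadd r (lat c)"
  using reps unfolding complete_reps_def lat_shift_eq_zadd_lat_vec by fastforce

lemma translate_reps_unique:
  assumes "r \<in> R" "r' \<in> R" "zadd r (lat c) = zadd r' (lat c')"
  shows "r = r' \<and> c = c'"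
proof -
  have "r = zadd r' (lat (fst c' - fst c, snd c' - snd c))"
    using assms(3) unfolding zadd_def lat_vec_def zscale_def prod_eq_iff
    by (auto simp: algebra_simps)
  then have "r = r'"
    using reps assms(1,2) unfolding complete_reps_def lat_shift_eq_zadd_lat_vec by blast
  with assms(3) have "lat c = lat c'"
    by (simp add: zadd_def prod_eq_iff)
  with \<open>r = r'\<close> show ?thesis using inj_lat by (simp add: inj_eq)
qed

lemma zadd_lat_uminus: "zadd (zadd x (lat c)) (lat (- fst c, - snd c)) = x"
  unfolding lat_vec_def zadd_def zscale_def by simp

lemma zadd_lat_mem: "x \<in> V' \<Longrightarrow> zadd x (lat c) \<in> V'"
  using periodic unfolding periodic_wrt_def lat_shift_eq_zadd_lat_vec
  by (metis imageI prod.collapse)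

lemma inj_on_translate_reps: "inj_on (\<lambda>(c, r). zadd r (lat c)) (UNIV \<times> R)"
  using translate_reps_unique by (auto intro!: inj_onI)

lemma V'_eq_translates: "V' = (\<lambda>(c, r). zadd r (lat c)) ` (UNIV \<times> (V' \<inter> R))"
proof (intro set_eqI iffI)
  fix w assume "w \<in> V'"
  obtain c r where "r \<in> R" "w = zadd r (lat c)"
    using translate_reps_surj by blast
  moreover have "r \<in> V'"
    using zadd_lat_mem[OF \<open>w \<in> V'\<close>, of "(- fst c, - snd c)"] zadd_lat_uminus calculation by simp
  ultimately show "w \<in> (\<lambda>(c, r). zadd r (lat c)) ` (UNIV \<times> (V' \<inter> R))" by auto
qed (auto intro: zadd_lat_mem)

lemma inj_on_translate_edges: "inj_on (\<lambda>(c, e). shift_edge (lat c) e) (UNIV \<times> (R \<times> UNIV))"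
  using translate_reps_unique by (auto intro!: inj_onI simp: shift_edge_def)

lemma translate_edges_eq_UNIV: "(\<lambda>(c, e). shift_edge (lat c) e) ` (UNIV \<times> (R \<times> UNIV)) = UNIV"
proof (intro set_eqI iffI)
  fix e :: edge
  obtain c r where "r \<in> R" "fst e = zadd r (lat c)"
    using translate_reps_surj by blast
  then show "e \<in> (\<lambda>(c, e). shift_edge (lat c) e) ` (UNIV \<times> (R \<times> UNIV))"
    by (intro image_eqI[of _ _ "(c, (r, snd e))"]) (auto simp: shift_edge_def prod_eq_iff)
qed auto

lemma translates_sum_le:
  fixes A :: "edge \<Rightarrow> real"
  assumes "A summable_on UNIV" "\<And>e. A e \<ge> 0" "finite E"
  shows "(\<lambda>c. \<Sum>e\<in>E. A (shift_edge (lat c) e)) summable_on UNIV"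
    and "infsum (\<lambda>c. \<Sum>e\<in>E. A (shift_edge (lat c) e)) UNIV \<le> real (card E) * infsum A UNIV"
proof -
  have inj: "inj (\<lambda>c. shift_edge (lat c) e)" for e
  proof (rule injI)
    fix c c' assume "shift_edge (lat c) e = shift_edge (lat c') e"
    then have "lat c = lat c'" by (simp add: shift_edge_def zadd_def prod_eq_iff)
    then show "c = c'" using inj_lat by (simp add: inj_eq)
  qed
  then have "(\<lambda>c. A (shift_edge (lat c) e)) summable_on UNIV"
    "infsum (\<lambda>c. A (shift_edge (lat c) e)) UNIV \<le> infsum A UNIV" for e
    using infsum_comp_inj_le[OF assms(1,2) inj[of e]] by (auto simp: comp_def)
  then show "(\<lambda>c. \<Sum>e\<in>E. A (shift_edge (lat c) e)) summable_on UNIV"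
    and "infsum (\<lambda>c. \<Sum>e\<in>E. A (shift_edge (lat c) e)) UNIV \<le> real (card E) * infsum A UNIV"
    using infsum_sum_finite_le[OF assms(3), of "\<lambda>e c. A (shift_edge (lat c) e)" UNIV "\<lambda>_. infsum A UNIV"]
    by auto
qed

end

section \<open>Edge integrals of a function in H1 of the graph\<close>

definition edge_Lpow :: "real \<Rightarrow> (real \<times> real \<Rightarrow> real) \<Rightarrow> real \<Rightarrow> edge \<Rightarrow> real" where
  "edge_Lpow eps u r e = (LBINT t:{0..eps}. \<bar>u (edge_pt eps e t)\<bar> powr r)"

definition edge_deriv_L2sq :: "real \<Rightarrow> (edge \<Rightarrow> real \<Rightarrow> real) \<Rightarrow> edge \<Rightarrow> real" where
  "edge_deriv_L2sq eps g e = (LBINT t:{0..eps}. (g e t)\<^sup>2)"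

definition edge_pow_deriv :: "real \<Rightarrow> (real \<times> real \<Rightarrow> real) \<Rightarrow> (edge \<Rightarrow> real \<Rightarrow> real) \<Rightarrow> real \<Rightarrow> edge \<Rightarrow> real" where
  "edge_pow_deriv eps u g q e = integral {0..eps} (\<lambda>t. \<bar>u (edge_pt eps e t)\<bar> powr (q - 1) * \<bar>g e t\<bar>)"

lemma Lpow_eq_infsum_edge_Lpow: "Lpow eps u r = infsum (edge_Lpow eps u r) UNIV"
  unfolding Lpow_def edge_Lpow_def ..

lemma deriv_L2sq_eq_infsum_edge_deriv_L2sq: "deriv_L2sq eps g = infsum (edge_deriv_L2sq eps g) UNIV"
  unfolding deriv_L2sq_def edge_deriv_L2sq_def ..

lemma edge_pt_0: "edge_pt eps (p, b) 0 = vertex_pt eps p"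
  and edge_pt_horizontal_end: "edge_pt eps ((i, j), True) eps = vertex_pt eps (i + 1, j)"
  and edge_pt_vertical_end: "edge_pt eps ((i, j), False) eps = vertex_pt eps (i, j + 1)"
  unfolding edge_pt_def vertex_pt_def by (auto simp: algebra_simps)

locale H1_on_graph =
  fixes eps :: real and u :: "real \<times> real \<Rightarrow> real" and g :: "edge \<Rightarrow> real \<Rightarrow> real"
  assumes eps_pos: "eps > 0" and H1: "H1_graph eps u g"
begin

abbreviation u_on :: "edge \<Rightarrow> real \<Rightarrow> real" where
  "u_on e t \<equiv> u (edge_pt eps e t)"

lemma H1_edge: "H1_edge eps (u_on e) (g e)"
  using H1 unfolding H1_graph_def by blast

lemmas deriv_absolutely_integrable = H1_edge_Henstock(1)[OF H1_edge]
  and deriv_square_integrable = H1_edge_Henstock(2)[OF H1_edge]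
  and edge_deriv_L2sq_eq_integral = H1_edge_Henstock(3)[OF H1_edge, folded edge_deriv_L2sq_def]
  and u_on_eq_integral = H1_edge_Henstock(4)[OF H1_edge]
  and continuous_u_on = H1_edge_Henstock(5)[OF H1_edge]

lemma edge_deriv_L2sq_nonneg: "edge_deriv_L2sq eps g e \<ge> 0"
  unfolding edge_deriv_L2sq_eq_integral using deriv_square_integrable by (intro integral_nonneg) auto

lemma continuous_abs_u_on_powr: "r > 0 \<Longrightarrow> continuous_on {0..eps} (\<lambda>t. \<bar>u_on e t\<bar> powr r)"
  using continuous_u_on by (intro continuous_on_powr' continuous_intros) auto

lemma set_integrable_abs_u_on_powr: "r > 0 \<Longrightarrow> set_integrable lborel {0..eps} (\<lambda>t. \<bar>u_on e t\<bar> powr r)"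
  unfolding set_integrable_def by (rule borel_integrable_compact) (auto intro: continuous_abs_u_on_powr)

lemma edge_Lpow_eq_integral:
  assumes "r > 0"
  shows "edge_Lpow eps u r e = integral {0..eps} (\<lambda>t. \<bar>u_on e t\<bar> powr r)"
    and "(\<lambda>t. \<bar>u_on e t\<bar> powr r) integrable_on {0..eps}"
  using set_borel_integral_eq_integral[OF set_integrable_abs_u_on_powr[OF assms]]
  unfolding edge_Lpow_def by auto

lemma edge_Lpow_nonneg: "edge_Lpow eps u r e \<ge> 0"
  unfolding edge_Lpow_def set_lebesgue_integral_def by (intro Bochner_Integration.integral_nonneg) auto

lemma pow_deriv_integrable:
  "q > 1 \<Longrightarrow> (\<lambda>t. \<bar>u_on e t\<bar> powr (q - 1) * \<bar>g e t\<bar>) integrable_on {0..eps}"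
  by (intro continuous_on_imp_integrable_mult_abs deriv_absolutely_integrable continuous_abs_u_on_powr) auto

lemma edge_pow_deriv_nonneg: "q > 1 \<Longrightarrow> edge_pow_deriv eps u g q e \<ge> 0"
  unfolding edge_pow_deriv_def using pow_deriv_integrable by (intro integral_nonneg) auto

lemma abs_powr_u_on_diff_le:
  assumes "q > 1" "s \<in> {0..eps}" "t \<in> {0..eps}"
  shows "\<bar>\<bar>u_on e s\<bar> powr q - \<bar>u_on e t\<bar> powr q\<bar> \<le> q * edge_pow_deriv eps u g q e"
  unfolding edge_pow_deriv_def
  using abs_powr_diff_le_integral[OF assms(1) continuous_u_on deriv_absolutely_integrable
      u_on_eq_integral assms(2,3)] .

lemma edge_pow_deriv_le_weighted:
  assumes "q > 1" "l > 0"
  shows "edge_pow_deriv eps u g q e \<le> (l * edge_Lpow eps u (2 * (q - 1)) e + edge_deriv_L2sq eps g e / l) / 2"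
proof -
  have r: "2 * (q - 1) > 0" using assms by simp
  have square: "(\<bar>x\<bar> powr (q - 1))\<^sup>2 = \<bar>x\<bar> powr (2 * (q - 1))" for x :: real
    unfolding mult_2 powr_add power2_eq_square ..
  have "edge_pow_deriv eps u g q e
          \<le> integral {0..eps} (\<lambda>t. (l * \<bar>u_on e t\<bar> powr (2 * (q - 1)) + (g e t)\<^sup>2 / l) / 2)"
    unfolding edge_pow_deriv_def
  proof (rule integral_le)
    show "(\<lambda>t. (l * \<bar>u_on e t\<bar> powr (2 * (q - 1)) + (g e t)\<^sup>2 / l) / 2) integrable_on {0..eps}"
      using edge_Lpow_eq_integral(2)[OF r] deriv_square_integrable
      by (intro integrable_on_divide integrable_add integrable_on_mult_right) auto
    show "\<bar>u_on e t\<bar> powr (q - 1) * \<bar>g e t\<bar> \<le> (l * \<bar>u_on e t\<bar> powr (2 * (q - 1)) + (g e t)\<^sup>2 / l) / 2" for t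
      using mult_le_weighted_squares[OF assms(2), of "\<bar>u_on e t\<bar> powr (q - 1)" "\<bar>g e t\<bar>"]
      by (simp add: square)
  qed (use pow_deriv_integrable assms in auto)
  also have "\<dots> = (l * edge_Lpow eps u (2 * (q - 1)) e + edge_deriv_L2sq eps g e / l) / 2"
    unfolding edge_Lpow_eq_integral(1)[OF r] edge_deriv_L2sq_eq_integral
    using integral_add[OF integrable_on_mult_right[OF edge_Lpow_eq_integral(2)[OF r, of e], of l]
        integrable_on_divide[OF deriv_square_integrable[of e], of l]]
    by simp
  finally show ?thesis .
qed

lemma u_on_square_le:
  assumes "t \<in> {0..eps}"
  shows "(u_on e t)\<^sup>2 \<le> 2 / eps * edge_Lpow eps u 2 e + 2 * eps * edge_deriv_L2sq eps g e"
proof -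
  have "edge_Lpow eps u 2 e = integral {0..eps} (\<lambda>s. (u_on e s)\<^sup>2)"
    using edge_Lpow_eq_integral(1)[of 2 e] by simp
  with square_le_mean_square_plus_deriv[OF eps_pos continuous_u_on deriv_absolutely_integrable
      deriv_square_integrable u_on_eq_integral assms]
  show ?thesis
    by (simp only: edge_deriv_L2sq_eq_integral)
qed

lemma summable_edge_deriv_L2sq: "edge_deriv_L2sq eps g summable_on UNIV"
proof (rule summable_on_if_nn_integral_count_space_finite)
  show "edge_deriv_L2sq eps g e \<ge> 0" for e by (rule edge_deriv_L2sq_nonneg)
  have "(\<integral>\<^sup>+ t\<in>{0..eps}. ennreal ((g e t)\<^sup>2) \<partial>lborel) = ennreal (edge_deriv_L2sq eps g e)" for e
  proof -
    have "set_integrable lborel {0..eps} (\<lambda>t. (g e t)\<^sup>2)"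
      using H1_edge[of e] unfolding H1_edge_def by blast
    then show ?thesis
      unfolding edge_deriv_L2sq_def by (rule set_nn_integral_eq_set_integral_if_set_integrable) simp
  qed
  then show "(\<integral>\<^sup>+ e. ennreal (edge_deriv_L2sq eps g e) \<partial>count_space UNIV) < \<infinity>"
    using H1 unfolding H1_graph_def by simp
qed

lemma summable_edge_L2: "edge_Lpow eps u 2 summable_on UNIV"
proof (rule summable_on_if_nn_integral_count_space_finite)
  show "edge_Lpow eps u 2 e \<ge> 0" for e by (rule edge_Lpow_nonneg)
  have "(\<integral>\<^sup>+ t\<in>{0..eps}. ennreal ((u_on e t)\<^sup>2) \<partial>lborel) = ennreal (edge_Lpow eps u 2 e)" for e
    using set_integrable_abs_u_on_powr[of 2 e] unfolding edge_Lpow_def abs_powr_two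
    by (intro set_nn_integral_eq_set_integral_if_set_integrable) auto
  then show "(\<integral>\<^sup>+ e. ennreal (edge_Lpow eps u 2 e) \<partial>count_space UNIV) < \<infinity>"
    using H1 unfolding H1_graph_def by simp
qed

lemma bounded_on_edges: "\<exists>B. \<forall>e. \<forall>t\<in>{0..eps}. \<bar>u_on e t\<bar> \<le> B"
proof -
  define B2 where "B2 = 2 / eps * infsum (edge_Lpow eps u 2) UNIV
                          + 2 * eps * infsum (edge_deriv_L2sq eps g) UNIV"
  have "(u_on e t)\<^sup>2 \<le> B2" if "t \<in> {0..eps}" for e t
  proof -
    have "edge_Lpow eps u 2 e \<le> infsum (edge_Lpow eps u 2) UNIV"
      using finite_sum_le_infsum[OF summable_edge_L2, of "{e}"] edge_Lpow_nonneg by simp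
    moreover have "edge_deriv_L2sq eps g e \<le> infsum (edge_deriv_L2sq eps g) UNIV"
      using finite_sum_le_infsum[OF summable_edge_deriv_L2sq, of "{e}"] edge_deriv_L2sq_nonneg by simp
    ultimately have "2 / eps * edge_Lpow eps u 2 e + 2 * eps * edge_deriv_L2sq eps g e \<le> B2"
      unfolding B2_def using eps_pos by (intro add_mono mult_left_mono) auto
    with u_on_square_le[OF that, of e] show ?thesis by linarith
  qed
  then have "\<bar>u_on e t\<bar> \<le> sqrt B2" if "t \<in> {0..eps}" for e t
    using that by (metis power2_abs real_le_rsqrt)
  then show ?thesis by blast
qed

lemma edge_Lpow_le_bound_powr:
  assumes "r \<ge> 2" and B: "\<And>e t. t \<in> {0..eps} \<Longrightarrow> \<bar>u_on e t\<bar> \<le> B"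
  shows "edge_Lpow eps u r e \<le> B powr (r - 2) * edge_Lpow eps u 2 e"
proof -
  have L2: "edge_Lpow eps u 2 e = integral {0..eps} (\<lambda>t. (u_on e t)\<^sup>2)"
    and i2: "(\<lambda>t. (u_on e t)\<^sup>2) integrable_on {0..eps}"
    using edge_Lpow_eq_integral[of 2 e] by simp_all
  have "edge_Lpow eps u r e \<le> integral {0..eps} (\<lambda>t. B powr (r - 2) * (u_on e t)\<^sup>2)"
    unfolding edge_Lpow_eq_integral(1)[of r e, OF order.strict_trans2[OF _ assms(1)], simplified]
    using edge_Lpow_eq_integral(2)[of r e] assms
    by (intro integral_le integrable_on_mult_right i2 abs_powr_le_bound_powr_mult_square) auto
  then show ?thesis by (simp add: L2)
qed

lemma summable_edge_Lpow: "r \<ge> 2 \<Longrightarrow> edge_Lpow eps u r summable_on UNIV"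
  using bounded_on_edges edge_Lpow_le_bound_powr edge_Lpow_nonneg
  by (metis summable_on_comparison_test summable_on_cmult_right summable_edge_L2)

lemma summable_edge_pow_deriv:
  assumes "q \<ge> 2"
  shows "edge_pow_deriv eps u g q summable_on UNIV"
proof (rule summable_on_comparison_test)
  show "(\<lambda>e. edge_Lpow eps u (2 * (q - 1)) e + edge_deriv_L2sq eps g e) summable_on UNIV"
    using assms by (intro summable_on_add summable_edge_Lpow summable_edge_deriv_L2sq) auto
  show "edge_pow_deriv eps u g q e \<le> edge_Lpow eps u (2 * (q - 1)) e + edge_deriv_L2sq eps g e" for e
    using edge_pow_deriv_le_weighted[of q 1 e] assms edge_Lpow_nonneg[of "2 * (q - 1)" e]
      edge_deriv_L2sq_nonneg[of e]
    by simp
  show "0 \<le> edge_pow_deriv eps u g q e" for e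
    using edge_pow_deriv_nonneg assms by simp
qed

lemma infsum_edge_pow_deriv_le:
  assumes "q \<ge> 2"
  shows "infsum (edge_pow_deriv eps u g q) UNIV \<le> sqrt (Lpow eps u (2 * (q - 1))) * sqrt (deriv_L2sq eps g)"
  unfolding Lpow_eq_infsum_edge_Lpow deriv_L2sq_eq_infsum_edge_deriv_L2sq
proof (rule le_sqrt_mult_sqrt_if_weighted)
  let ?Z = "edge_Lpow eps u (2 * (q - 1))" and ?Y = "edge_deriv_L2sq eps g"
  have Z: "?Z summable_on UNIV" using summable_edge_Lpow assms by simp
  show "0 \<le> infsum ?Z UNIV" "0 \<le> infsum ?Y UNIV"
    using edge_Lpow_nonneg edge_deriv_L2sq_nonneg by (auto intro: infsum_nonneg)
  fix l :: real
  assume "l > 0"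
  have "infsum (edge_pow_deriv eps u g q) UNIV \<le> infsum (\<lambda>e. l / 2 * ?Z e + 1 / (2 * l) * ?Y e) UNIV"
    using edge_pow_deriv_le_weighted[OF _ \<open>l > 0\<close>] assms
    by (intro infsum_mono summable_edge_pow_deriv summable_on_add
        summable_on_cmult_right Z summable_edge_deriv_L2sq) (auto simp: field_simps)
  also have "\<dots> = l / 2 * infsum ?Z UNIV + 1 / (2 * l) * infsum ?Y UNIV"
    using infsum_add[OF summable_on_cmult_right[OF Z, of "l / 2"]
        summable_on_cmult_right[OF summable_edge_deriv_L2sq, of "1 / (2 * l)"]]
      infsum_cmult_right[OF Z, of "l / 2"]
      infsum_cmult_right[OF summable_edge_deriv_L2sq, of "1 / (2 * l)"]
    by simp
  also have "\<dots> = (l * infsum ?Z UNIV + infsum ?Y UNIV / l) / 2"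
    by (simp add: field_simps)
  finally show "infsum (edge_pow_deriv eps u g q) UNIV \<le> (l * infsum ?Z UNIV + infsum ?Y UNIV / l) / 2" .
qed

lemma summable_vertex_powr:
  assumes "q \<ge> 2"
  shows "(\<lambda>v. \<bar>u (vertex_pt eps v)\<bar> powr q) summable_on V"
proof -
  obtain B where B: "\<And>e t. t \<in> {0..eps} \<Longrightarrow> \<bar>u_on e t\<bar> \<le> B"
    using bounded_on_edges by blast
  define h where "h = (\<lambda>e. B powr (q - 2) * (2 / eps * edge_Lpow eps u 2 e + 2 * eps * edge_deriv_L2sq eps g e))"
  have "h summable_on UNIV"
    unfolding h_def by (intro summable_on_cmult_right summable_on_add summable_edge_L2 summable_edge_deriv_L2sq)
  moreover have "inj (\<lambda>v. (v, True))" by (auto intro: injI)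
  moreover have "h e \<ge> 0" for e
    unfolding h_def using eps_pos edge_Lpow_nonneg edge_deriv_L2sq_nonneg by auto
  ultimately have "(h \<circ> (\<lambda>v. (v, True))) summable_on V"
    using infsum_comp_inj_le(1) summable_on_subset by blast
  then show ?thesis
  proof (rule summable_on_comparison_test)
    fix v
    have "\<bar>u (vertex_pt eps v)\<bar> powr q \<le> B powr (q - 2) * (u (vertex_pt eps v))\<^sup>2"
      using B[of 0 "(v, True)"] eps_pos assms
      by (intro abs_powr_le_bound_powr_mult_square) (auto simp: edge_pt_0)
    also have "\<dots> \<le> h (v, True)"
      unfolding h_def using u_on_square_le[of 0 "(v, True)"] eps_pos
      by (intro mult_left_mono) (auto simp: edge_pt_0)
    finally show "\<bar>u (vertex_pt eps v)\<bar> powr q \<le> (h \<circ> (\<lambda>v. (v, True))) v" by simp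
  qed simp
qed

lemma abs_vertex_powr_diff_le_stair:
  assumes "q > 1"
  shows "\<bar>\<bar>u (vertex_pt eps x)\<bar> powr q - \<bar>u (vertex_pt eps y)\<bar> powr q\<bar>
           \<le> q * (\<Sum>e\<in>stair_edges x y. edge_pow_deriv eps u g q e)"
proof -
  define F where "F = (\<lambda>v. \<bar>u (vertex_pt eps v)\<bar> powr q)"
  define H where "H = (\<lambda>i::int. ((i, snd x), True))"
  define V where "V = (\<lambda>j::int. ((fst y, j), False))"
  let ?A = "edge_pow_deriv eps u g q"
  have ends: "0 \<in> {0..eps}" "eps \<in> {0..eps}" using eps_pos by auto
  have "\<bar>F (i + 1, snd x) - F (i, snd x)\<bar> \<le> q * ?A (H i)" for i
    using abs_powr_u_on_diff_le[OF assms ends(2,1), of "H i"]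
    by (simp add: F_def H_def edge_pt_0 edge_pt_horizontal_end)
  then have "\<bar>F (fst x, snd x) - F (fst y, snd x)\<bar> \<le> (\<Sum>i\<in>{min (fst x) (fst y)..<max (fst x) (fst y)}. q * ?A (H i))"
    by (intro abs_diff_le_sum_steps[of "\<lambda>i. F (i, snd x)"])
  moreover have "\<bar>F (fst y, j + 1) - F (fst y, j)\<bar> \<le> q * ?A (V j)" for j
    using abs_powr_u_on_diff_le[OF assms ends(2,1), of "V j"]
    by (simp add: F_def V_def edge_pt_0 edge_pt_vertical_end)
  then have "\<bar>F (fst y, snd x) - F (fst y, snd y)\<bar> \<le> (\<Sum>j\<in>{min (snd x) (snd y)..<max (snd x) (snd y)}. q * ?A (V j))"
    by (intro abs_diff_le_sum_steps[of "\<lambda>j. F (fst y, j)"])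
  moreover have "(\<Sum>e\<in>stair_edges x y. ?A e)
      = (\<Sum>i\<in>{min (fst x) (fst y)..<max (fst x) (fst y)}. ?A (H i))
        + (\<Sum>j\<in>{min (snd x) (snd y)..<max (snd x) (snd y)}. ?A (V j))"
    unfolding stair_edges_def H_def[symmetric] V_def[symmetric]
    by (subst sum.union_disjoint) (auto simp: H_def V_def sum.reindex inj_on_def)
  ultimately show ?thesis
    unfolding F_def by (simp add: sum_distrib_left[symmetric] distrib_left) argo
qed

lemma abs_vertex_edge_diff_le:
  assumes "q > 1"
  shows "\<bar>eps * \<bar>u (vertex_pt eps x)\<bar> powr q - edge_Lpow eps u q (y, b)\<bar>
           \<le> eps * q * ((\<Sum>e\<in>stair_edges x y. edge_pow_deriv eps u g q e) + edge_pow_deriv eps u g q (y, b))"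
proof -
  define c where "c = q * ((\<Sum>e\<in>stair_edges x y. edge_pow_deriv eps u g q e) + edge_pow_deriv eps u g q (y, b))"
  define W where "W = \<bar>u (vertex_pt eps x)\<bar> powr q"
  have Fe: "(\<lambda>t. \<bar>u_on (y, b) t\<bar> powr q) integrable_on {0..eps}"
    using edge_Lpow_eq_integral(2) assms by simp
  have "\<bar>W - \<bar>u_on (y, b) t\<bar> powr q\<bar> \<le> c" if "t \<in> {0..eps}" for t
    using abs_vertex_powr_diff_le_stair[OF assms, of x y] eps_pos that
      abs_powr_u_on_diff_le[OF assms, of 0 t "(y, b)"]
    unfolding c_def W_def by (simp add: edge_pt_0 distrib_left) argo
  then have "\<bar>integral {0..eps} (\<lambda>t. W - \<bar>u_on (y, b) t\<bar> powr q)\<bar> \<le> integral {0..eps} (\<lambda>t. c)"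
    using integral_norm_bound_integral[of "\<lambda>t. W - \<bar>u_on (y, b) t\<bar> powr q" "{0..eps}" "\<lambda>t. c"]
      integrable_diff[OF integrable_const_ivl Fe] integrable_const_ivl[of c 0 eps]
    by auto
  moreover have "integral {0..eps} (\<lambda>t. W - \<bar>u_on (y, b) t\<bar> powr q) = eps * W - edge_Lpow eps u q (y, b)"
    using integral_diff[OF integrable_const_ivl Fe, of W] edge_Lpow_eq_integral(1)[of q "(y, b)"] assms eps_pos
    by simp
  ultimately show ?thesis
    using eps_pos unfolding c_def W_def by (simp add: ac_simps)
qed

lemma abs_vertex_edge_diff_le_shifted:
  assumes "q > 1"
  shows "\<bar>eps * \<bar>u (vertex_pt eps (zadd x w))\<bar> powr q - edge_Lpow eps u q (shift_edge w e)\<bar>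
           \<le> eps * q * ((\<Sum>e'\<in>stair_edges x (fst e). edge_pow_deriv eps u g q (shift_edge w e'))
                         + edge_pow_deriv eps u g q (shift_edge w e))"
  using abs_vertex_edge_diff_le[OF assms, of "zadd x w" "zadd (fst e) w" "snd e"]
  by (simp add: stair_edges_zadd sum.reindex inj_shift_edge inj_on_subset[OF inj_shift_edge]
      shift_edge_def[of w e])

lemma abs_cell_average_diff_le:
  assumes "q > 1" "finite V0" "V0 \<noteq> {}"
  shows "\<bar>eps * (real (card E) / real (card V0)) * (\<Sum>x\<in>V0. \<bar>u (vertex_pt eps (zadd x w))\<bar> powr q)
            - (\<Sum>e\<in>E. edge_Lpow eps u q (shift_edge w e))\<bar>
         \<le> eps * q / real (card V0) * (\<Sum>x\<in>V0. \<Sum>e\<in>E.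
              (\<Sum>e'\<in>stair_edges x (fst e). edge_pow_deriv eps u g q (shift_edge w e'))
              + edge_pow_deriv eps u g q (shift_edge w e))"
proof -
  let ?F = "\<lambda>x. eps * \<bar>u (vertex_pt eps (zadd x w))\<bar> powr q" and ?Z = "\<lambda>e. edge_Lpow eps u q (shift_edge w e)"
  have "\<bar>eps * (real (card E) / real (card V0)) * (\<Sum>x\<in>V0. \<bar>u (vertex_pt eps (zadd x w))\<bar> powr q)
          - (\<Sum>e\<in>E. ?Z e)\<bar> \<le> (\<Sum>x\<in>V0. \<Sum>e\<in>E. \<bar>?F x - ?Z e\<bar>) / real (card V0)"
    using abs_scaled_sum_diff_le[OF assms(2,3), where a = ?F and B = E and b = ?Z]
    by (simp add: sum_distrib_left ac_simps)
  also have "\<dots> \<le> (\<Sum>x\<in>V0. \<Sum>e\<in>E. eps * q * ((\<Sum>e'\<in>stair_edges x (fst e).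
              edge_pow_deriv eps u g q (shift_edge w e')) + edge_pow_deriv eps u g q (shift_edge w e)))
            / real (card V0)"
    by (intro divide_right_mono sum_mono abs_vertex_edge_diff_le_shifted assms(1)) auto
  also have "\<dots> = eps * q / real (card V0) * (\<Sum>x\<in>V0. \<Sum>e\<in>E.
              (\<Sum>e'\<in>stair_edges x (fst e). edge_pow_deriv eps u g q (shift_edge w e'))
              + edge_pow_deriv eps u g q (shift_edge w e))"
    by (simp add: sum_distrib_left sum_divide_distrib)
  finally show ?thesis .
qed

end

section \<open>Vertex sums versus edge integrals\<close>

definition stair_constant :: "zpt set \<Rightarrow> zpt set \<Rightarrow> real" where
  "stair_constant V0 R =
     (\<Sum>x\<in>V0. \<Sum>e\<in>R \<times> (UNIV :: bool set). real (card (stair_edges x (fst e))) + 1) / real (card V0)"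

locale periodic_H1 = H1_on_graph + periodic_cell
begin

lemma translated_stair_sums_bound:
  assumes "q \<ge> 2" "finite V0"
  defines "b \<equiv> \<lambda>c. \<Sum>x\<in>V0. \<Sum>e\<in>R \<times> (UNIV :: bool set).
      (\<Sum>e'\<in>stair_edges x (fst e). edge_pow_deriv eps u g q (shift_edge (lat c) e'))
      + edge_pow_deriv eps u g q (shift_edge (lat c) e)"
  shows "b summable_on UNIV"
    and "infsum b UNIV \<le> (\<Sum>x\<in>V0. \<Sum>e\<in>R \<times> (UNIV :: bool set). real (card (stair_edges x (fst e))) + 1)
                          * infsum (edge_pow_deriv eps u g q) UNIV"
proof -
  let ?A = "edge_pow_deriv eps u g q"
  have A: "?A summable_on UNIV" "\<And>e. ?A e \<ge> 0"
    using summable_edge_pow_deriv edge_pow_deriv_nonneg assms(1) by auto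
  let ?a = "\<lambda>x e c. (\<Sum>e'\<in>stair_edges x (fst e). ?A (shift_edge (lat c) e')) + ?A (shift_edge (lat c) e)"
  have single: "?a x e summable_on UNIV"
    "infsum (?a x e) UNIV \<le> (real (card (stair_edges x (fst e))) + 1) * infsum ?A UNIV" for x e
  proof -
    note path = translates_sum_le[OF A finite_stair_edges, of x "fst e"]
    note edge = translates_sum_le[OF A, of "{e}", simplified]
    show "?a x e summable_on UNIV"
      "infsum (?a x e) UNIV \<le> (real (card (stair_edges x (fst e))) + 1) * infsum ?A UNIV"
      using summable_on_add[OF path(1) edge(1)] infsum_add[OF path(1) edge(1)] path(2) edge(2)
      by (simp_all add: distrib_right)
  qed
  have fin: "finite (R \<times> (UNIV :: bool set))" using finite_reps by simp
  have inner: "(\<lambda>c. \<Sum>e\<in>R \<times> (UNIV :: bool set). ?a x e c) summable_on UNIV"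
    "infsum (\<lambda>c. \<Sum>e\<in>R \<times> (UNIV :: bool set). ?a x e c) UNIV
       \<le> (\<Sum>e\<in>R \<times> (UNIV :: bool set). (real (card (stair_edges x (fst e))) + 1) * infsum ?A UNIV)" for x
    using infsum_sum_finite_le[where f = "?a x"
          and M = "\<lambda>e. (real (card (stair_edges x (fst e))) + 1) * infsum ?A UNIV", OF fin single]
    by simp_all
  from infsum_sum_finite_le[OF assms(2), where f = "\<lambda>x c. \<Sum>e\<in>R \<times> (UNIV :: bool set). ?a x e c", OF inner]
  show "b summable_on UNIV"
    and "infsum b UNIV \<le> (\<Sum>x\<in>V0. \<Sum>e\<in>R \<times> (UNIV :: bool set). real (card (stair_edges x (fst e))) + 1) * infsum ?A UNIV"
    unfolding b_def by (simp_all add: sum_distrib_right)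
qed

lemma has_sum_vertex_cells:
  assumes "q \<ge> 2"
  shows "((\<lambda>c. \<Sum>x\<in>V' \<inter> R. \<bar>u (vertex_pt eps (zadd x (lat c)))\<bar> powr q)
            has_sum infsum (\<lambda>v. \<bar>u (vertex_pt eps v)\<bar> powr q) V') UNIV"
proof -
  have "inj_on (\<lambda>(c, x). zadd x (lat c)) (UNIV \<times> (V' \<inter> R))"
    by (rule inj_on_subset[OF inj_on_translate_reps]) auto
  from has_sum_reindex_Times_finite[OF this _ summable_vertex_powr[OF assms]] finite_reps
  show ?thesis by (simp flip: V'_eq_translates)
qed

lemma has_sum_edge_cells:
  assumes "q \<ge> 2"
  shows "((\<lambda>c. \<Sum>e\<in>R \<times> (UNIV :: bool set). edge_Lpow eps u q (shift_edge (lat c) e)) has_sum Lpow eps u q) UNIV"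
proof -
  have "edge_Lpow eps u q summable_on (\<lambda>(c, e). shift_edge (lat c) e) ` (UNIV \<times> (R \<times> UNIV))"
    unfolding translate_edges_eq_UNIV by (rule summable_edge_Lpow[OF assms])
  from has_sum_reindex_Times_finite[OF inj_on_translate_edges _ this] finite_reps
  show ?thesis
    unfolding Lpow_eq_infsum_edge_Lpow by (simp add: translate_edges_eq_UNIV)
qed

lemma vertex_sum_approximates_Lpow:
  assumes q: "q \<ge> 2" and V0: "V' \<inter> R \<noteq> {}"
  shows "\<bar>eps * (real (card (R \<times> (UNIV :: bool set))) / real (card (V' \<inter> R)))
             * infsum (\<lambda>v. \<bar>u (vertex_pt eps v)\<bar> powr q) V' - Lpow eps u q\<bar>
         \<le> eps * q * stair_constant (V' \<inter> R) R * infsum (edge_pow_deriv eps u g q) UNIV"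
proof -
  define V0 where "V0 = V' \<inter> R"
  define E0 where "E0 = R \<times> (UNIV :: bool set)"
  define F where "F = (\<lambda>v. \<bar>u (vertex_pt eps v)\<bar> powr q)"
  define \<kappa> where "\<kappa> = real (card E0) / real (card V0)"
  let ?A = "edge_pow_deriv eps u g q" and ?Z = "edge_Lpow eps u q"
  have fin: "finite V0" "V0 \<noteq> {}"
    using finite_reps V0 by (simp_all add: V0_def)
  have gap: "((\<lambda>c. eps * \<kappa> * (\<Sum>x\<in>V0. F (zadd x (lat c))) - (\<Sum>e\<in>E0. ?Z (shift_edge (lat c) e)))
               has_sum (eps * \<kappa> * infsum F V' - Lpow eps u q)) UNIV"
    unfolding V0_def E0_def F_def
    by (intro has_sum_diff has_sum_cmult_right has_sum_vertex_cells has_sum_edge_cells q)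
  define b where "b = (\<lambda>c. \<Sum>x\<in>V0. \<Sum>e\<in>E0.
      (\<Sum>e'\<in>stair_edges x (fst e). ?A (shift_edge (lat c) e')) + ?A (shift_edge (lat c) e))"
  have b: "b summable_on UNIV"
    "infsum b UNIV \<le> (\<Sum>x\<in>V0. \<Sum>e\<in>E0. real (card (stair_edges x (fst e))) + 1) * infsum ?A UNIV"
    using translated_stair_sums_bound[OF q fin(1)] unfolding b_def E0_def by simp_all
  have "\<bar>eps * \<kappa> * (\<Sum>x\<in>V0. F (zadd x (lat c))) - (\<Sum>e\<in>E0. ?Z (shift_edge (lat c) e))\<bar>
          \<le> eps * q / real (card V0) * b c" for c
    using abs_cell_average_diff_le[where q = q and w = "lat c" and E = E0, OF _ fin] q
    unfolding \<kappa>_def F_def b_def by (simp add: mult.assoc)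
  then have "\<bar>eps * \<kappa> * infsum F V' - Lpow eps u q\<bar> \<le> eps * q / real (card V0) * infsum b UNIV"
    using norm_infsum_le[OF gap has_sum_cmult_right[OF b(1)[unfolded summable_iff_has_sum_infsum],
          of "eps * q / real (card V0)"]]
    by (simp only: real_norm_def)
  also have "\<dots> \<le> eps * q * stair_constant V0 R * infsum ?A UNIV"
    using mult_left_mono[OF b(2), of "eps * q / real (card V0)"] eps_pos q
    by (simp add: stair_constant_def E0_def)
  finally show ?thesis unfolding V0_def E0_def F_def \<kappa>_def .
qed

lemma vertex_sum_approximates_Lpow_sqrt:
  assumes "q \<ge> 2" "V' \<inter> R \<noteq> {}"
  shows "\<bar>eps * (2 * real (card R) / real (card (V' \<inter> R)))
             * infsum (\<lambda>v. \<bar>u (vertex_pt eps v)\<bar> powr q) V' - Lpow eps u q\<bar>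
         \<le> q * stair_constant (V' \<inter> R) R * eps
             * ((Lpow eps u (2 * (q - 1))) powr (1/2) * sqrt (deriv_L2sq eps g))"
proof -
  have "stair_constant (V' \<inter> R) R \<ge> 0"
    unfolding stair_constant_def by (intro divide_nonneg_nonneg sum_nonneg) auto
  then have "eps * q * stair_constant (V' \<inter> R) R \<ge> 0"
    using eps_pos assms(1) by simp
  have "Lpow eps u (2 * (q - 1)) \<ge> 0"
    unfolding Lpow_eq_infsum_edge_Lpow by (intro infsum_nonneg edge_Lpow_nonneg)
  have "\<bar>eps * (2 * real (card R) / real (card (V' \<inter> R)))
             * infsum (\<lambda>v. \<bar>u (vertex_pt eps v)\<bar> powr q) V' - Lpow eps u q\<bar>
        \<le> eps * q * stair_constant (V' \<inter> R) R * infsum (edge_pow_deriv eps u g q) UNIV"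
    using vertex_sum_approximates_Lpow[OF assms] finite_reps by (simp add: card_cartesian_product mult.commute)
  also have "\<dots> \<le> eps * q * stair_constant (V' \<inter> R) R
                    * (sqrt (Lpow eps u (2 * (q - 1))) * sqrt (deriv_L2sq eps g))"
    by (rule mult_left_mono[OF infsum_edge_pow_deriv_le[OF assms(1)]]) fact
  finally show ?thesis
    using \<open>Lpow eps u (2 * (q - 1)) \<ge> 0\<close> by (simp add: powr_half_sqrt ac_simps)
qed

end

theorem lemma2p2:
  fixes q :: real and V' :: "zpt set" and v1 v2 :: zpt and R :: "zpt set"
  assumes "q \<ge> 2"
    and "V' \<noteq> {}"
    and "periodic_wrt V' v1 v2"
    and "complete_reps v1 v2 R"
  shows "\<exists>C>0. \<forall>eps>0. \<forall>u g. H1_graph eps u g \<longrightarrow>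
     \<bar>eps * (2 * real (card (int_pts (cellQ0 R))) / real (card (V' \<inter> int_pts (cellQ0 R))))
           * infsum (\<lambda>v. \<bar>u (vertex_pt eps v)\<bar> powr q) V'
        - Lpow eps u q\<bar>
     \<le> C * eps * (Lpow eps u (2 * (q - 1))) powr (1/2) * sqrt (deriv_L2sq eps g)"
proof -
  interpret periodic_cell V' v1 v2 R
    using assms(3,4) by unfold_locales
  have V0: "V' \<inter> R \<noteq> {}"
    using V'_eq_translates assms(2) by auto
  define K where "K = q * stair_constant (V' \<inter> R) R"
  have "K \<ge> 0"
    unfolding K_def stair_constant_def using assms(1) by (intro mult_nonneg_nonneg divide_nonneg_nonneg sum_nonneg) auto
  have "\<bar>eps * (2 * real (card R) / real (card (V' \<inter> R)))
           * infsum (\<lambda>v. \<bar>u (vertex_pt eps v)\<bar> powr q) V' - Lpow eps u q\<bar>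
     \<le> (K + 1) * eps * (Lpow eps u (2 * (q - 1))) powr (1/2) * sqrt (deriv_L2sq eps g)"
    if "eps > 0" "H1_graph eps u g" for eps u g
  proof -
    interpret periodic_H1 eps u g V' v1 v2 R
      using that assms(3,4) by unfold_locales
    have "deriv_L2sq eps g \<ge> 0"
      unfolding deriv_L2sq_eq_infsum_edge_deriv_L2sq by (intro infsum_nonneg edge_deriv_L2sq_nonneg)
    have "K * eps \<le> (K + 1) * eps"
      using that(1) by (simp add: algebra_simps)
    then have "K * eps * ((Lpow eps u (2 * (q - 1))) powr (1/2) * sqrt (deriv_L2sq eps g))
               \<le> (K + 1) * eps * ((Lpow eps u (2 * (q - 1))) powr (1/2) * sqrt (deriv_L2sq eps g))"
      by (rule mult_right_mono) (simp add: \<open>deriv_L2sq eps g \<ge> 0\<close>)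
    with vertex_sum_approximates_Lpow_sqrt[OF assms(1) V0] show ?thesis
      unfolding K_def by (simp only: mult.assoc)
  qed
  with \<open>K \<ge> 0\<close> show ?thesis
    unfolding int_pts_cellQ0 by (intro exI[of _ "K + 1"]) auto
qed

end
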